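(* Let $\delta>0$, data $(\mathbf{x}_i,y_i)$, $i=1,\dots,n$, with $\mathbf{x}_i\in\mathbb{R}^p$, $y_i\in\{-1,1\}$, and let $P_{\lambda_1,\lambda_2}(\boldsymbol\beta)=\sum_{j=1}^p P_{\lambda_1}(|\beta_j|)+\frac{\lambda_2}{2}\|\boldsymbol\beta\|_2^2$ be a penalty function. Define $$R(\boldsymbol\beta,\beta_0)=\frac1n\sum_{i=1}^n v\big(y_i(\beta_0+\mathbf{x}_i^\top\boldsymbol\beta)\big)+P_{\lambda_1,\lambda_2}(\boldsymbol\beta),\qquad R(\boldsymbol\beta,\beta_0\mid\delta)=\frac1n\sum_{i=1}^n B_\delta\big(y_i(\beta_0+\mathbf{x}_i^\top\boldsymbol\beta)\big)+P_{\lambda_1,\lambda_2}(\boldsymbol\beta),$$ where $v(t)=(1-t)_+$. Then $$\inf_{(\boldsymbol\beta,\beta_0)}R(\boldsymbol\beta,\beta_0)\le\inf_{(\boldsymbol\beta,\beta_0)}R(\boldsymbol\beta,\beta_0\mid\delta)\le\inf_{(\boldsymbol\beta,\beta_0)}R(\boldsymbol\beta,\beta_0)+\delta.$$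
   Context: $B_\delta$ (the BernSVM loss) is defined by $B_\delta(t)=(1-t)_+$ if $|t-1|>\delta$ and $B_\delta(t)=g_\delta(t)=\frac{1}{8\delta^{3}}\{\frac{(1-t+\delta)^{4}}{2}-(1-t-\delta)(1-t+\delta)^{3}\}$ if $|t-1|\le\delta$. The penalty $P_{\lambda_1}$ may be e.g. $\lambda_1|\beta_j|$, $\lambda_1 w_j|\beta_j|$, SCAD or MCP. *)

theory Defs
  imports "HOL-Analysis.Analysis"
begin

definition hinge :: "real \<Rightarrow> real" where
  "hinge t = max (1 - t) 0"

definition bern_g :: "real \<Rightarrow> real \<Rightarrow> real" where
  "bern_g \<delta> t = (1 / (8 * \<delta>^3)) *
     ((1 - t + \<delta>)^4 / 2 - (1 - t - \<delta>) * (1 - t + \<delta>)^3)"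

definition bernsvm_loss :: "real \<Rightarrow> real \<Rightarrow> real" where
  "bernsvm_loss \<delta> t = (if \<bar>t - 1\<bar> > \<delta> then hinge t else bern_g \<delta> t)"

definition penalty :: "(real \<Rightarrow> real) \<Rightarrow> real \<Rightarrow> real^'p \<Rightarrow> real" where
  "penalty P lam2 \<beta> = (\<Sum>j\<in>UNIV. P \<bar>\<beta> $ j\<bar>) + lam2 / 2 * (norm \<beta>)^2"

definition risk :: "(real \<Rightarrow> real) \<Rightarrow> nat \<Rightarrow> (nat \<Rightarrow> real^'p) \<Rightarrow> (nat \<Rightarrow> real)
   \<Rightarrow> (real \<Rightarrow> real) \<Rightarrow> real \<Rightarrow> real^'p \<Rightarrow> real \<Rightarrow> real" where
  "risk L n x y P lam2 \<beta> \<beta>0 =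
     (1 / real n) * (\<Sum>i<n. L (y i * (\<beta>0 + x i \<bullet> \<beta>))) + penalty P lam2 \<beta>"

end

theory Submission
  imports Defs
begin

text \<open>On the smoothing window the Bernstein polynomial factors as
  \<open>16 \<delta>\<^sup>3 g = (u + \<delta>)\<^sup>3 (3\<delta> - u)\<close> and \<open>16 \<delta>\<^sup>3 (g - u) = (\<delta> - u)\<^sup>3 (u + 3\<delta>)\<close>,
  where \<open>u = 1 - t\<close>; both right-hand sides are nonnegative for \<open>|u| \<le> \<delta>\<close>, so \<open>g\<close> lies
  above the hinge \<open>max u 0\<close>, and bounding the vanishing cubic factor by \<open>\<delta>\<^sup>3\<close> puts it
  at most \<open>\<delta>/4\<close> above it. Averaging these pointwise bounds over the sample and
  passing to infima gives the proposition.\<close>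

lemma bern_g_eq:
  assumes "d \<noteq> 0"
  shows "bern_g d t = (1 - t + d)^3 * (3*d - (1 - t)) / (16 * d^3)"
  using assms unfolding bern_g_def by (simp add: field_simps; algebra)

lemma bern_g_minus_margin_eq:
  assumes "d \<noteq> 0"
  shows "bern_g d t - (1 - t) = (d - (1 - t))^3 * (1 - t + 3*d) / (16 * d^3)"
  using assms unfolding bern_g_def by (simp add: field_simps; algebra)

lemma hinge_le_bern_g:
  assumes "d > 0" and "\<bar>t - 1\<bar> \<le> d"
  shows "hinge t \<le> bern_g d t"
proof -
  have "0 \<le> bern_g d t"
    using assms by (simp add: bern_g_eq)
  moreover have "1 - t \<le> bern_g d t"
  proof -
    have "0 \<le> (d - (1 - t))^3 * (1 - t + 3*d) / (16 * d^3)"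
      using assms by (intro divide_nonneg_nonneg mult_nonneg_nonneg zero_le_power) auto
    then show ?thesis
      using bern_g_minus_margin_eq[of d t] assms(1) by simp
  qed
  ultimately show ?thesis
    by (simp add: hinge_def)
qed

lemma bern_g_le_hinge_plus:
  assumes "d > 0" and "\<bar>t - 1\<bar> \<le> d"
  shows "bern_g d t \<le> hinge t + d / 4"
proof (cases "t \<le> 1")
  case True
  have "(d - (1 - t))^3 * (1 - t + 3*d) \<le> d^3 * (4*d)"
    using True assms by (intro mult_mono power_mono) auto
  then have "bern_g d t - (1 - t) \<le> d / 4"
    using assms(1) by (simp add: bern_g_minus_margin_eq divide_le_eq power3_eq_cube)
  then show ?thesis
    using True by (simp add: hinge_def)
next
  case False
  have "(1 - t + d)^3 * (3*d - (1 - t)) \<le> d^3 * (4*d)"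
    using False assms by (intro mult_mono power_mono) auto
  then have "bern_g d t \<le> d / 4"
    using assms(1) by (simp add: bern_g_eq divide_le_eq power3_eq_cube)
  then show ?thesis
    using False by (simp add: hinge_def)
qed

lemma hinge_le_bernsvm_loss:
  assumes "d > 0"
  shows "hinge t \<le> bernsvm_loss d t"
  using hinge_le_bern_g[OF assms] by (simp add: bernsvm_loss_def)

lemma bernsvm_loss_le_hinge_plus:
  assumes "d > 0"
  shows "bernsvm_loss d t \<le> hinge t + d"
  using bern_g_le_hinge_plus[OF assms, of t] assms
  by (auto simp: bernsvm_loss_def)

lemma risk_mono:
  assumes "\<And>t. L t \<le> M t"
  shows "risk L n x y P lam2 \<beta> \<beta>0 \<le> risk M n x y P lam2 \<beta> \<beta>0"
  unfolding risk_def using assms by (simp add: sum_mono divide_right_mono)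

lemma risk_add_const:
  assumes "n \<ge> 1"
  shows "risk (\<lambda>t. L t + c) n x y P lam2 \<beta> \<beta>0 = risk L n x y P lam2 \<beta> \<beta>0 + c"
  using assms unfolding risk_def by (simp add: sum.distrib field_simps)

lemma INF_ereal_le_INF_plus:
  fixes f g :: "'a \<Rightarrow> real"
  assumes "\<And>b. b \<in> A \<Longrightarrow> g b \<le> f b + c"
  shows "(INF b\<in>A. ereal (g b)) \<le> (INF b\<in>A. ereal (f b)) + ereal c"
proof -
  have "(INF b\<in>A. ereal (g b)) - ereal c \<le> (INF b\<in>A. ereal (f b))"
  proof (rule INF_greatest)
    fix b assume "b \<in> A"
    then have "(INF b\<in>A. ereal (g b)) \<le> ereal (f b) + ereal c"
      using assms by (intro INF_lower2) auto
    then show "(INF b\<in>A. ereal (g b)) - ereal c \<le> ereal (f b)"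
      by (simp add: ereal_minus_le_iff)
  qed
  then show ?thesis
    by (simp add: ereal_minus_le_iff add.commute)
qed

text \<open>The bounds hold for every margin.\<close>

theorem proposition2:
  fixes \<delta> :: real and n :: nat and x :: "nat \<Rightarrow> real^'p" and y :: "nat \<Rightarrow> real"
    and P :: "real \<Rightarrow> real" and lam2 :: real
  assumes "\<delta> > 0" and "n \<ge> 1" and "\<forall>i<n. y i \<in> {-1, 1}"
  shows "(INF b. ereal (risk hinge n x y P lam2 (fst b) (snd b)))
           \<le> (INF b. ereal (risk (bernsvm_loss \<delta>) n x y P lam2 (fst b) (snd b)))
       \<and> (INF b. ereal (risk (bernsvm_loss \<delta>) n x y P lam2 (fst b) (snd b)))
           \<le> (INF b. ereal (risk hinge n x y P lam2 (fst b) (snd b))) + ereal \<delta>"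
proof
  let ?R = "\<lambda>b. risk hinge n x y P lam2 (fst b) (snd b)"
  let ?R\<delta> = "\<lambda>b. risk (bernsvm_loss \<delta>) n x y P lam2 (fst b) (snd b)"
  have "?R b \<le> ?R\<delta> b" for b
    by (rule risk_mono) (rule hinge_le_bernsvm_loss[OF \<open>\<delta> > 0\<close>])
  then show "(INF b. ereal (?R b)) \<le> (INF b. ereal (?R\<delta> b))"
    by (intro INF_mono') simp
  have "?R\<delta> b \<le> risk (\<lambda>t. hinge t + \<delta>) n x y P lam2 (fst b) (snd b)" for b
    by (rule risk_mono) (rule bernsvm_loss_le_hinge_plus[OF \<open>\<delta> > 0\<close>])
  then have "?R\<delta> b \<le> ?R b + \<delta>" for b
    by (simp only: risk_add_const[OF \<open>n \<ge> 1\<close>])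
  then show "(INF b. ereal (?R\<delta> b)) \<le> (INF b. ereal (?R b)) + ereal \<delta>"
    by (rule INF_ereal_le_INF_plus)
qed

end
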